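(* Let $k\ge1$ and $n,m\in A_{2k}$. If $\max\mathcal{CG}(n)<\max\mathcal{CG}(m)$, then $n<m$.
   Context: Fibonacci numbers: $F_1=F_2=1$, $F_{n+1}=F_n+F_{n-1}$ for $n\ge2$. Chung–Graham decomposition: every positive integer $n$ has a unique representation $n=\sum_{i\ge1}c_iF_{2i}$ with $c_i\in\{0,1,2\}$, only finitely many nonzero, such that whenever $c_i=c_j=2$ with $i<j$ there is $k$ with $i<k<j$ and $c_k=0$. Let $\mathcal{CG}(n)$ be the set of $F_{2i}$ with $c_i\neq0$. For $k\ge1$, $A_{2k}=\{n\ge1:\min\mathcal{CG}(n)=F_{2k}\}$. *)

theory Defs
  imports Main "HOL-Number_Theory.Fib"
begin

text \<open>Fibonacci numbers: fib 1 = fib 2 = 1 (library fib, with fib 0 = 0).\<close>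

definition CG_rep :: "nat \<Rightarrow> (nat \<Rightarrow> nat) \<Rightarrow> bool" where
  "CG_rep n c \<longleftrightarrow>
     c 0 = 0 \<and>
     (\<forall>i. c i \<le> 2) \<and>
     finite {i. c i \<noteq> 0} \<and>
     (\<forall>i j. i < j \<and> c i = 2 \<and> c j = 2 \<longrightarrow> (\<exists>k. i < k \<and> k < j \<and> c k = 0)) \<and>
     n = (\<Sum>i\<in>{i. c i \<noteq> 0}. c i * fib (2 * i))"

definition CG_coeffs :: "nat \<Rightarrow> (nat \<Rightarrow> nat)" where
  "CG_coeffs n = (THE c. CG_rep n c)"

definition CG :: "nat \<Rightarrow> nat set" where
  "CG n = {fib (2 * i) | i. i \<ge> 1 \<and> CG_coeffs n i \<noteq> 0}"

definition A :: "nat \<Rightarrow> nat set" where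
  "A k = {n. n \<ge> 1 \<and> Min (CG n) = fib (2 * k)}"

end

theory Submission
  imports Defs
begin

text \<open>If the Chung--Graham coefficients of a number vanish above index J, then their
  partial sum is below F(2J+2), and even below F(2J+1) when each coefficient 2 is
  followed by a 0 before index J is exceeded; this follows by induction on J from
  F(2J+4) = 2 F(2J+2) + F(2J+1).  Reading off digits with this bound gives uniqueness
  of the representation, and a greedy choice of digits gives existence, so CG is well
  defined.  A number whose largest Chung--Graham term is F(2J) therefore lies in
  [F(2J), F(2J+2)), and these intervals are ordered like J.  The hypothesis
  n, m \<in> A k is only needed for n, m \<ge> 1.\<close>

definition cg_admissible :: "(nat \<Rightarrow> nat) \<Rightarrow> bool" where
  "cg_admissible c \<longleftrightarrow> (\<forall>i. c i \<le> 2) \<and>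
     (\<forall>i j. i < j \<and> c i = 2 \<and> c j = 2 \<longrightarrow> (\<exists>k. i < k \<and> k < j \<and> c k = 0))"

definition twos_closed :: "(nat \<Rightarrow> nat) \<Rightarrow> nat \<Rightarrow> bool" where
  "twos_closed c j \<longleftrightarrow> (\<forall>i\<le>j. c i = 2 \<longrightarrow> (\<exists>k. i < k \<and> k \<le> j \<and> c k = 0))"

definition cg_sum :: "(nat \<Rightarrow> nat) \<Rightarrow> nat \<Rightarrow> nat" where
  "cg_sum c j = (\<Sum>i\<le>j. c i * fib (2 * i))"

lemma fib_odd_step: "fib (Suc (2 * Suc j)) = fib (2 * Suc j) + fib (Suc (2 * j))"
  by simp

lemma fib_even_step: "fib (2 * Suc (Suc j)) = 2 * fib (2 * Suc j) + fib (Suc (2 * j))"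
  by simp

lemma less_fib_even: "n < fib (2 * Suc n)"
proof (induction n)
  case (Suc n)
  have "fib (Suc (2 * Suc n)) > 0" by (simp add: fib_neq_0_nat)
  with Suc.IH show ?case by (simp only: fib_even_step fib_odd_step)
qed simp

lemma cg_sum_0 [simp]: "cg_sum c 0 = 0"
  by (simp add: cg_sum_def)

lemma cg_sum_Suc: "cg_sum c (Suc j) = cg_sum c j + c (Suc j) * fib (2 * Suc j)"
  by (simp add: cg_sum_def)

lemma cg_sum_cong: "(\<And>i. i \<le> j \<Longrightarrow> c i = d i) \<Longrightarrow> cg_sum c j = cg_sum d j"
  unfolding cg_sum_def by (rule sum.cong) auto

lemma cg_sum_upd: "cg_sum (c(Suc j := a)) (Suc j) = cg_sum c j + a * fib (2 * Suc j)"
  by (simp add: cg_sum_Suc cg_sum_cong[of j "c(Suc j := a)" c])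

lemma twos_closed_if_zero:
  assumes "c (Suc j) = 0" shows "twos_closed c (Suc j)"
  unfolding twos_closed_def
proof (intro allI impI)
  fix i assume "i \<le> Suc j" "c i = 2"
  with assms have "i < Suc j" by (cases "i = Suc j") auto
  with assms show "\<exists>k. i < k \<and> k \<le> Suc j \<and> c k = 0" by blast
qed

lemma twos_closed_Suc_imp:
  assumes "twos_closed c (Suc j)" "c (Suc j) \<noteq> 0" shows "twos_closed c j"
  unfolding twos_closed_def
proof (intro allI impI)
  fix i assume "i \<le> j" "c i = 2"
  then obtain k where "i < k" "k \<le> Suc j" "c k = 0"
    using assms(1) unfolding twos_closed_def by (meson le_SucI)
  moreover from assms(2) \<open>c k = 0\<close> have "k \<noteq> Suc j" by auto
  ultimately show "\<exists>k. i < k \<and> k \<le> j \<and> c k = 0" by (auto simp: le_Suc_eq)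
qed

lemma not_twos_closed: "c j = 2 \<Longrightarrow> \<not> twos_closed c j"
  unfolding twos_closed_def by auto

lemma twos_closed_before_two:
  assumes "cg_admissible c" "c (Suc j) = 2" shows "twos_closed c j"
  unfolding twos_closed_def
proof (intro allI impI)
  fix i assume "i \<le> j" "c i = 2"
  then obtain k where "i < k" "k < Suc j" "c k = 0"
    using assms unfolding cg_admissible_def by (meson le_imp_less_Suc)
  then show "\<exists>k. i < k \<and> k \<le> j \<and> c k = 0" by auto
qed

lemma twos_closed_upd:
  assumes "twos_closed c j" "a \<noteq> 2" shows "twos_closed (c(Suc j := a)) (Suc j)"
  unfolding twos_closed_def
proof (intro allI impI)
  fix i assume "i \<le> Suc j" "(c(Suc j := a)) i = 2"
  with assms(2) have "i \<le> j" "c i = 2" by (auto simp: le_Suc_eq split: if_splits)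
  then obtain k where "i < k" "k \<le> j" "c k = 0" using assms(1) unfolding twos_closed_def by blast
  then show "\<exists>k. i < k \<and> k \<le> Suc j \<and> (c(Suc j := a)) k = 0" by (intro exI[of _ k]) auto
qed

lemma cg_admissible_upd:
  assumes "cg_admissible c" "\<forall>i>j. c i = 0" "a \<le> 2" "a = 2 \<longrightarrow> twos_closed c j"
  shows "cg_admissible (c(Suc j := a))"
  unfolding cg_admissible_def
proof (intro conjI allI impI)
  fix i show "(c(Suc j := a)) i \<le> 2" using assms(1,3) by (simp add: cg_admissible_def)
next
  fix i l assume il: "i < l \<and> (c(Suc j := a)) i = 2 \<and> (c(Suc j := a)) l = 2"
  have "l \<le> Suc j"
  proof (rule ccontr)
    assume "\<not> l \<le> Suc j"
    then have "(c(Suc j := a)) l = 0" using assms(2) by simp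
    with il show False by simp
  qed
  with il have "i \<le> j" "c i = 2" by auto
  show "\<exists>k. i < k \<and> k < l \<and> (c(Suc j := a)) k = 0"
  proof (cases "l = Suc j")
    case True
    then obtain k where "i < k" "k \<le> j" "c k = 0"
      using assms(4) il \<open>i \<le> j\<close> \<open>c i = 2\<close> by (auto simp: twos_closed_def)
    with True show ?thesis by (intro exI[of _ k]) auto
  next
    case False
    then have "c l = 2" "l \<le> j" using il \<open>l \<le> Suc j\<close> by auto
    then obtain k where "i < k" "k < l" "c k = 0"
      using assms(1) il \<open>c i = 2\<close> unfolding cg_admissible_def by blast
    with \<open>l \<le> j\<close> show ?thesis by (intro exI[of _ k]) auto
  qed
qed

lemma cg_sum_bound:
  assumes "cg_admissible c"
  shows "cg_sum c j < fib (2 * Suc j) \<and> (twos_closed c j \<longrightarrow> cg_sum c j < fib (Suc (2 * j)))"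
proof (induction j)
  case (Suc j)
  have IH: "cg_sum c j < fib (2 * Suc j)" "twos_closed c j \<Longrightarrow> cg_sum c j < fib (Suc (2 * j))"
    using Suc.IH by auto
  have "c (Suc j) \<le> 2" using assms by (simp add: cg_admissible_def)
  then consider "c (Suc j) = 0" | "c (Suc j) = 1" | "c (Suc j) = 2" by linarith
  then show ?case
  proof cases
    case 1
    then show ?thesis using IH fib_Suc_mono[of "Suc (2 * j)"]
      by (simp add: cg_sum_Suc fib_odd_step fib_even_step)
  next
    case 2
    then show ?thesis using IH fib_Suc_mono[of "Suc (2 * j)"] twos_closed_Suc_imp[of c j]
      by (auto simp: cg_sum_Suc fib_odd_step fib_even_step)
  next
    case 3
    then show ?thesis using IH twos_closed_before_two[OF assms 3] not_twos_closed[of c "Suc j"] 3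
      by (simp add: cg_sum_Suc fib_even_step)
  qed
qed simp

text \<open>Greedy digits: the new top digit is r div F(2J+2); the bound r < F(2J+4) and
  F(2J+1) \<le> F(2J+2) make it at most 2, with remainder below F(2J+1) when it equals 2.\<close>

lemma cg_sum_surj:
  "r < fib (2 * Suc j) \<Longrightarrow> \<exists>c. cg_admissible c \<and> c 0 = 0 \<and> (\<forall>i>j. c i = 0) \<and>
     cg_sum c j = r \<and> (r < fib (Suc (2 * j)) \<longrightarrow> twos_closed c j)"
proof (induction j arbitrary: r)
  case 0
  then show ?case
    by (intro exI[of _ "\<lambda>_. 0"]) (simp add: cg_admissible_def twos_closed_def)
next
  case (Suc j)
  define F where "F = fib (2 * Suc j)"
  define G where "G = fib (Suc (2 * j))"
  define a where "a = r div F"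
  have GF: "G \<le> F" "0 < G" unfolding F_def G_def by (simp_all add: fib_Suc_mono fib_neq_0_nat)
  have r: "r < 2 * F + G" using Suc.prems fib_even_step[of j] by (simp add: F_def G_def)
  have r_eq: "r = a * F + r mod F" by (simp add: a_def)
  have "r < 3 * F" using r GF by linarith
  then have a_le: "a \<le> 2" using less_mult_imp_div_less[of r 3 F] by (simp add: a_def)
  have top: "r mod F < G" if "a = 2" using r r_eq that by simp
  obtain c where c: "cg_admissible c" "c 0 = 0" "\<forall>i>j. c i = 0" "cg_sum c j = r mod F"
    and cl: "r mod F < G \<longrightarrow> twos_closed c j"
    using Suc.IH[of "r mod F"] GF by (auto simp: F_def G_def)
  define d where "d = c(Suc j := a)"
  have "cg_admissible d" unfolding d_def using c a_le top cl by (intro cg_admissible_upd) auto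
  moreover have "cg_sum d (Suc j) = r" using c(4) r_eq by (simp add: d_def cg_sum_upd F_def)
  moreover have "twos_closed d (Suc j)" if "r < F + G"
  proof (cases "a = 0")
    case True
    then show ?thesis by (simp add: d_def twos_closed_if_zero)
  next
    case False
    moreover have "a < 2" using that GF less_mult_imp_div_less[of r 2 F] by (simp add: a_def)
    ultimately have "a = 1" by simp
    then show ?thesis using that r_eq cl by (simp add: d_def twos_closed_upd)
  qed
  moreover have "d 0 = 0" "\<forall>i>Suc j. d i = 0" using c(2,3) by (auto simp: d_def)
  ultimately show ?case using fib_odd_step[of j] by (intro exI[of _ d]) (simp add: F_def G_def)
qed

lemma cg_sum_inj:
  assumes "cg_admissible c" "cg_admissible d" "c 0 = 0" "d 0 = 0" "cg_sum c j = cg_sum d j"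
  shows "i \<le> j \<Longrightarrow> c i = d i"
  using assms(5)
proof (induction j arbitrary: i)
  case (Suc j)
  define F where "F = fib (2 * Suc j)"
  have lt: "cg_sum c j < F" "cg_sum d j < F"
    using cg_sum_bound[OF assms(1)] cg_sum_bound[OF assms(2)] by (auto simp: F_def)
  have eq: "cg_sum c j + c (Suc j) * F = cg_sum d j + d (Suc j) * F"
    using Suc.prems(2) by (simp add: cg_sum_Suc F_def)
  have top: "c (Suc j) = d (Suc j)"
    using arg_cong[OF eq, of "\<lambda>x. x div F"] lt by simp
  with eq have "cg_sum c j = cg_sum d j" by simp
  with Suc.IH top Suc.prems(1) show ?case by (cases "i = Suc j") auto
qed (use assms in simp)

lemma CG_rep_admissible: "CG_rep n c \<Longrightarrow> cg_admissible c \<and> c 0 = 0"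
  by (simp add: CG_rep_def cg_admissible_def)

lemma support_subset_atMost:
  fixes c :: "nat \<Rightarrow> 'a::zero"
  assumes "\<forall>i>N. c i = 0" shows "{i. c i \<noteq> 0} \<subseteq> {..N}"
proof
  fix i assume "i \<in> {i. c i \<noteq> 0}"
  with assms show "i \<in> {..N}" by (cases "N < i") auto
qed

lemma CG_rep_eq_cg_sum:
  assumes "CG_rep n c" "\<forall>i>N. c i = 0"
  shows "n = cg_sum c N"
proof -
  have "n = (\<Sum>i\<in>{i. c i \<noteq> 0}. c i * fib (2 * i))" using assms(1) unfolding CG_rep_def by blast
  also have "\<dots> = cg_sum c N" unfolding cg_sum_def
    using support_subset_atMost[OF assms(2)] by (intro sum.mono_neutral_left) auto
  finally show ?thesis .
qed

lemma CG_rep_support_bounded: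
  assumes "CG_rep n c" obtains N where "\<forall>i>N. c i = 0"
proof -
  have "finite {i. c i \<noteq> 0}" using assms by (simp add: CG_rep_def)
  then obtain N where "\<forall>i\<in>{i. c i \<noteq> 0}. i \<le> N" using finite_nat_set_iff_bounded_le by blast
  then have "\<forall>i>N. c i = 0" using leD by blast
  then show ?thesis by (rule that)
qed

lemma CG_rep_exists: "\<exists>c. CG_rep n c"
proof -
  obtain c where c: "cg_admissible c" "c 0 = 0" "\<forall>i>n. c i = 0" "cg_sum c n = n"
    using cg_sum_surj[OF less_fib_even] by blast
  have supp: "{i. c i \<noteq> 0} \<subseteq> {..n}" using support_subset_atMost[OF c(3)] .
  have "(\<Sum>i\<in>{i. c i \<noteq> 0}. c i * fib (2 * i)) = cg_sum c n" unfolding cg_sum_def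
    by (rule sum.mono_neutral_left) (use supp in auto)
  then have "CG_rep n c"
    using c finite_subset[OF supp] unfolding CG_rep_def cg_admissible_def by simp
  then show ?thesis by blast
qed

lemma CG_rep_unique:
  assumes "CG_rep n c" "CG_rep n d" shows "c = d"
proof
  fix i
  obtain N1 where N1: "\<forall>i>N1. c i = 0" using CG_rep_support_bounded[OF assms(1)] .
  obtain N2 where N2: "\<forall>i>N2. d i = 0" using CG_rep_support_bounded[OF assms(2)] .
  define N where "N = max (max N1 N2) i"
  have "\<forall>i>N. c i = 0" "\<forall>i>N. d i = 0" using N1 N2 by (auto simp: N_def)
  then have "cg_sum c N = cg_sum d N"
    using CG_rep_eq_cg_sum[OF assms(1)] CG_rep_eq_cg_sum[OF assms(2)] by simp
  with CG_rep_admissible[OF assms(1)] CG_rep_admissible[OF assms(2)]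
  show "c i = d i" using cg_sum_inj[of c d N i] by (simp add: N_def)
qed

lemma CG_rep_CG_coeffs: "CG_rep n (CG_coeffs n)"
proof -
  have "\<exists>!c. CG_rep n c" using CG_rep_exists CG_rep_unique by blast
  then show ?thesis unfolding CG_coeffs_def by (rule theI')
qed

lemma Max_CG_bounds:
  assumes "n \<ge> 1"
  obtains J where "Max (CG n) = fib (2 * J)" "fib (2 * J) \<le> n" "n < fib (2 * Suc J)"
proof -
  define c where "c = CG_coeffs n"
  have rep: "CG_rep n c" by (simp add: c_def CG_rep_CG_coeffs)
  have adm: "cg_admissible c" "c 0 = 0" using CG_rep_admissible[OF rep] by auto
  define S where "S = {i. c i \<noteq> 0}"
  have fin: "finite S" using rep by (simp add: CG_rep_def S_def)
  have "S \<noteq> {}"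
  proof
    assume "S = {}"
    then have "n = 0" using rep by (simp add: CG_rep_def S_def)
    with assms show False by simp
  qed
  define J where "J = Max S"
  have J: "c J \<noteq> 0" "\<And>i. c i \<noteq> 0 \<Longrightarrow> i \<le> J"
    using Max_in[OF fin \<open>S \<noteq> {}\<close>] Max_ge[OF fin] by (auto simp: J_def S_def)
  have "{i. 1 \<le> i \<and> c i \<noteq> 0} = S"
    using adm(2) by (auto simp: S_def) (metis One_nat_def Suc_leI gr0I)
  then have "CG n = (\<lambda>i. fib (2 * i)) ` S"
    by (simp add: CG_def c_def[symmetric] setcompr_eq_image)
  then have "Max (CG n) = fib (2 * J)"
    using fin J by (intro Max_eqI) (auto simp: S_def intro: fib_mono)
  moreover have n: "n = cg_sum c J" using CG_rep_eq_cg_sum[OF rep] J(2) by (metis not_le)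
  moreover have "fib (2 * J) \<le> n"
  proof -
    have "fib (2 * J) \<le> c J * fib (2 * J)" using J(1) by simp
    also have "\<dots> \<le> cg_sum c J" unfolding cg_sum_def
      by (rule member_le_sum[where f = "\<lambda>i. c i * fib (2 * i)"]) auto
    finally show ?thesis using n by simp
  qed
  moreover have "cg_sum c J < fib (2 * Suc J)" using cg_sum_bound[OF adm(1)] by blast
  ultimately show ?thesis using that by simp
qed

theorem corollary3p2:
  fixes k n m :: nat
  assumes "k \<ge> 1" and "n \<in> A k" and "m \<in> A k"
    and "Max (CG n) < Max (CG m)"
  shows "n < m"
proof -
  have "n \<ge> 1" "m \<ge> 1" using assms(2,3) by (auto simp: A_def)
  obtain J where J: "Max (CG n) = fib (2 * J)" "n < fib (2 * Suc J)"
    using Max_CG_bounds[OF \<open>n \<ge> 1\<close>] by blast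
  obtain K where K: "Max (CG m) = fib (2 * K)" "fib (2 * K) \<le> m"
    using Max_CG_bounds[OF \<open>m \<ge> 1\<close>] by blast
  have "J < K" using assms(4) J(1) K(1) fib_mono[of "2 * K" "2 * J"] by (cases "J < K") auto
  then have "fib (2 * Suc J) \<le> fib (2 * K)" by (intro fib_mono) simp
  with J(2) K(2) show ?thesis by simp
qed

end
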